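(* Let $N\in\mathbb{Z}$ and let $(a_n)_{n\le N}$ be elements of $\mathbb{C}_p$ with $a_n\to0$ as $n\to-\infty$. If the function $\sum_{n=-\infty}^N a_n(\mathbf x-\mathbf 1)^{\star n}$ (a uniformly convergent series in $C(\mathbb{Z}_p,\mathbb{C}_p)$) is identically zero, then $a_n=0$ for all $n\le N$. Consequently every function of the form $\sum_{n=-\infty}^N a_n(\mathbf x-\mathbf 1)^{\star n}$ determines its coefficients $a_n$ uniquely.
   Context: Fix a prime $p$. $\mathbb{C}_p$ denotes the completion of an algebraic closure of $\mathbb{Q}_p$, with absolute value $|\cdot|$ normalized by $|p|=1/p$. $C(\mathbb{Z}_p,\mathbb{C}_p)$ is the $\mathbb{C}_p$-Banach space of continuous functions $\mathbb{Z}_p\to\mathbb{C}_p$ with the sup-norm $\|\cdot\|$. For $n\in\mathbb{Z}_{\ge0}$ and $x\in\mathbb{Z}_p$, $\binom{x}{n}=x(x-1)\cdots(x-n+1)/n!$. For $y\in\mathbb{Z}_p$ and $\phi\in C(\mathbb{Z}_p,\mathbb{C}_p)$, $S^y(\phi)(x)=\sum_{k\ge0}(-1)^k k!\binom yk\binom xk\phi(x-k)$; each $S^y$ is norm-preserving. $\mathbf 1$ is the constant function $1$, $\mathbf x$ is $x\mapsto x$, and for $n\in\mathbb{Z}$, $(\mathbf x-\mathbf 1)^{\star n}:=(-1)^nS^n(\mathbf 1)$ (these have sup-norm $1$). *)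

theory Defs
  imports "HOL-Computational_Algebra.Polynomial"
begin

text \<open>We work inside an arbitrary field K of characteristic 0
  carrying an absolute value nrm which is non-archimedean, complete, with nrm p = 1/p, and
  K algebraically closed. Inside K, Q_p is the closure of the rationals, Z_p the closure of
  the integers, and C_p the closure of the set of elements algebraic over Q_p (this is the
  completion of an algebraic closure of Q_p, unique up to isometric isomorphism).\<close>

definition nonarch_abs :: "('a::field_char_0 \<Rightarrow> real) \<Rightarrow> bool" where
  "nonarch_abs nrm \<longleftrightarrow>
     (\<forall>x. nrm x \<ge> 0) \<and> (\<forall>x. nrm x = 0 \<longleftrightarrow> x = 0) \<and>
     (\<forall>x y. nrm (x * y) = nrm x * nrm y) \<and>
     (\<forall>x y. nrm (x + y) \<le> max (nrm x) (nrm y))"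

definition nconv :: "('a::field_char_0 \<Rightarrow> real) \<Rightarrow> (nat \<Rightarrow> 'a) \<Rightarrow> 'a \<Rightarrow> bool" where
  "nconv nrm s l \<longleftrightarrow> (\<forall>e>0. \<exists>M. \<forall>m\<ge>M. nrm (s m - l) < e)"

definition ncauchy :: "('a::field_char_0 \<Rightarrow> real) \<Rightarrow> (nat \<Rightarrow> 'a) \<Rightarrow> bool" where
  "ncauchy nrm s \<longleftrightarrow> (\<forall>e>0. \<exists>M. \<forall>m\<ge>M. \<forall>n\<ge>M. nrm (s m - s n) < e)"

definition ncomplete :: "('a::field_char_0 \<Rightarrow> real) \<Rightarrow> bool" where
  "ncomplete nrm \<longleftrightarrow> (\<forall>s. ncauchy nrm s \<longrightarrow> (\<exists>l. nconv nrm s l))"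

definition alg_closed_field :: "'a::field itself \<Rightarrow> bool" where
  "alg_closed_field _ \<longleftrightarrow> (\<forall>q::'a poly. degree q > 0 \<longrightarrow> (\<exists>x. poly q x = 0))"

definition padic_ambient :: "nat \<Rightarrow> ('a::field_char_0 \<Rightarrow> real) \<Rightarrow> bool" where
  "padic_ambient p nrm \<longleftrightarrow> prime p \<and> nonarch_abs nrm \<and> ncomplete nrm \<and>
     alg_closed_field TYPE('a) \<and> nrm (of_nat p) = 1 / real p"

definition nclosure :: "('a::field_char_0 \<Rightarrow> real) \<Rightarrow> 'a set \<Rightarrow> 'a set" where
  "nclosure nrm S = {x. \<forall>e>0. \<exists>y\<in>S. nrm (x - y) < e}"

definition Qp :: "('a::field_char_0 \<Rightarrow> real) \<Rightarrow> 'a set" where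
  "Qp nrm = nclosure nrm (range of_rat)"

definition Zp :: "('a::field_char_0 \<Rightarrow> real) \<Rightarrow> 'a set" where
  "Zp nrm = nclosure nrm (range of_int)"

definition Cp :: "('a::field_char_0 \<Rightarrow> real) \<Rightarrow> 'a set" where
  "Cp nrm = nclosure nrm
     {x. \<exists>q. q \<noteq> 0 \<and> (\<forall>i. coeff q i \<in> Qp nrm) \<and> poly q x = 0}"

definition nsums :: "('a::field_char_0 \<Rightarrow> real) \<Rightarrow> (nat \<Rightarrow> 'a) \<Rightarrow> 'a \<Rightarrow> bool" where
  "nsums nrm f s \<longleftrightarrow> nconv nrm (\<lambda>m. \<Sum>k<m. f k) s"

definition nsuminf :: "('a::field_char_0 \<Rightarrow> real) \<Rightarrow> (nat \<Rightarrow> 'a) \<Rightarrow> 'a" where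
  "nsuminf nrm f = (THE s. nsums nrm f s)"

definition binom :: "'a::field_char_0 \<Rightarrow> nat \<Rightarrow> 'a" where
  "binom x k = (\<Prod>i<k. (x - of_nat i)) / of_nat (fact k)"

definition Sop :: "('a::field_char_0 \<Rightarrow> real) \<Rightarrow> 'a \<Rightarrow> ('a \<Rightarrow> 'a) \<Rightarrow> 'a \<Rightarrow> 'a" where
  "Sop nrm y \<phi> x = nsuminf nrm
     (\<lambda>k. (-1) ^ k * of_nat (fact k) * binom y k * binom x k * \<phi> (x - of_nat k))"

text \<open>(x - 1)^{star n} = (-1)^n S^n(1), for n an integer\<close>
definition xm1_star :: "('a::field_char_0 \<Rightarrow> real) \<Rightarrow> int \<Rightarrow> 'a \<Rightarrow> 'a" where
  "xm1_star nrm n x = (-1) ^ nat \<bar>n\<bar> * Sop nrm (of_int n) (\<lambda>_. 1) x"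

end

(* Evaluating the series at x = i, a natural number, makes S^n(1)(i) a finite sum, so the
   functional g \<mapsto> \<Sum>_{n\<le>N} (-1)^n a_n g(n) kills the polynomials
   \<Sum>_{k\<le>i} (-1)^k k! C(i,k) C(y,k). This system is triangular in the binomial basis, so the
   functional kills every C(y,j) and, by y C(y,j) = j C(y,j) + (j+1) C(y,j+1), every polynomial.
   Given n0 \<le> N and \<epsilon> > 0, pick M with |a_n| < \<epsilon> for n \<le> M and apply the functional to
   C(y - M, n0 - M) C(N - y, N - n0): it is integer valued, equals 1 at n0 and 0 at the other
   integers of [M, N], so the ultrametric inequality gives |a_n0| < \<epsilon>.
   Only the non-archimedean property and the completeness of the absolute value are used. *)

theory Submission
  imports Defs
begin

lemma binom_eq_gbinomial: "binom x k = x gchoose k"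
  by (simp add: binom_def gbinomial_prod_rev atLeast0LessThan)

lemma gbinomial_Suc_eq: "(a gchoose Suc k) = (a - of_nat k) / of_nat (Suc k) * (a gchoose k)"
  for a :: "'a::field_char_0"
  using gbinomial_mult_1[of a k] by (simp add: field_simps del: of_nat_Suc)

lemma gbinomial_of_nat_self: "(of_nat n gchoose n :: 'a::field_char_0) = 1"
  by (simp flip: binomial_gbinomial)

lemma gbinomial_of_nat_eq_0: "n < k \<Longrightarrow> (of_nat n gchoose k :: 'a::field_char_0) = 0"
  by (simp flip: binomial_gbinomial)

lemma gbinomial_of_int_Ints: "(of_int n gchoose k :: 'a::field_char_0) \<in> \<int>"
  unfolding of_int_gbinomial[symmetric] by (rule Ints_of_int)

definition binomial_bump :: "int \<Rightarrow> int \<Rightarrow> int \<Rightarrow> 'a::field_char_0 \<Rightarrow> 'a"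
  where "binomial_bump M n\<^sub>0 N y =
    ((y - of_int M) gchoose nat (n\<^sub>0 - M)) * ((of_int N - y) gchoose nat (N - n\<^sub>0))"

lemma binomial_bump_center:
  "M \<le> n\<^sub>0 \<Longrightarrow> n\<^sub>0 \<le> N \<Longrightarrow> binomial_bump M n\<^sub>0 N (of_int n\<^sub>0 :: 'a::field_char_0) = 1"
  by (simp add: binomial_bump_def gbinomial_of_nat_self flip: of_int_diff of_nat_nat)

lemma binomial_bump_vanishes:
  assumes "M \<le> n" "n \<le> N" "n \<noteq> n\<^sub>0"
  shows "binomial_bump M n\<^sub>0 N (of_int n :: 'a::field_char_0) = 0"
proof (cases "n < n\<^sub>0")
  case True
  then have "(of_int n - of_int M :: 'a) = of_nat (nat (n - M))" "nat (n - M) < nat (n\<^sub>0 - M)"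
    using assms by simp_all
  then show ?thesis
    by (simp add: binomial_bump_def gbinomial_of_nat_eq_0)
next
  case False
  then have "(of_int N - of_int n :: 'a) = of_nat (nat (N - n))" "nat (N - n) < nat (N - n\<^sub>0)"
    using assms by simp_all
  then show ?thesis
    by (simp add: binomial_bump_def gbinomial_of_nat_eq_0)
qed

lemma binomial_bump_Ints: "binomial_bump M n\<^sub>0 N (of_int n :: 'a::field_char_0) \<in> \<int>"
  unfolding binomial_bump_def of_int_diff[symmetric] by (intro Ints_mult gbinomial_of_int_Ints)

locale nonarch_absolute_value =
  fixes nrm :: "'a::field_char_0 \<Rightarrow> real"
  assumes nonarch_abs: "nonarch_abs nrm"
begin

lemma nrm_nonneg: "nrm x \<ge> 0"
  using nonarch_abs by (simp add: nonarch_abs_def)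

lemma nrm_eq_0_iff [simp]: "nrm x = 0 \<longleftrightarrow> x = 0"
  using nonarch_abs by (simp add: nonarch_abs_def)

lemma nrm_mult: "nrm (x * y) = nrm x * nrm y"
  using nonarch_abs by (simp add: nonarch_abs_def)

lemma nrm_add_le_max: "nrm (x + y) \<le> max (nrm x) (nrm y)"
  using nonarch_abs by (simp add: nonarch_abs_def)

lemma nrm_0 [simp]: "nrm 0 = 0"
  by simp

lemma nrm_pos_iff: "nrm x > 0 \<longleftrightarrow> x \<noteq> 0"
  using nrm_nonneg[of x] nrm_eq_0_iff[of x] by linarith

lemma nrm_1 [simp]: "nrm 1 = 1"
  using nrm_mult[of 1 1] nrm_pos_iff[of 1] by simp

lemma nrm_minus_1 [simp]: "nrm (-1) = 1"
proof -
  have "nrm (-1) ^ 2 = 1"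
    by (simp add: power2_eq_square flip: nrm_mult)
  with nrm_nonneg[of "-1"] show ?thesis
    by (auto simp: power2_eq_1_iff)
qed

lemma nrm_minus [simp]: "nrm (- x) = nrm x"
  using nrm_mult[of "-1" x] by simp

lemma nrm_power: "nrm (x ^ k) = nrm x ^ k"
  by (induction k) (simp_all add: nrm_mult)

lemma nrm_minus_commute: "nrm (x - y) = nrm (y - x)"
  by (metis minus_diff_eq nrm_minus)

lemma nrm_add_less: "nrm x < e \<Longrightarrow> nrm y < e \<Longrightarrow> nrm (x + y) < e"
  using nrm_add_le_max[of x y] by linarith

lemma nrm_sum_less:
  assumes "finite A" "e > 0" "\<And>k. k \<in> A \<Longrightarrow> nrm (f k) < e"
  shows "nrm (sum f A) < e"
  using assms by (induction A rule: finite_induct) (auto intro: nrm_add_less)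

lemma nrm_of_nat_le_1: "nrm (of_nat n) \<le> 1"
proof (induction n)
  case (Suc n)
  then show ?case
    using nrm_add_le_max[of 1 "of_nat n"] by simp
qed simp

lemma nrm_Ints_le_1: "x \<in> \<int> \<Longrightarrow> nrm x \<le> 1"
  by (elim Ints_cases) (metis nrm_minus nrm_of_nat_le_1 of_int_of_nat)

lemma of_nat_in_Zp: "of_nat i \<in> Zp nrm"
  unfolding Zp_def nclosure_def by (auto intro!: exI[of _ "int i"])

lemma eq_0_if_nrm_less: "(\<And>e. e > 0 \<Longrightarrow> nrm x < e) \<Longrightarrow> x = 0"
  using nrm_pos_iff by blast

lemma nconv_unique:
  assumes "nconv nrm s l" "nconv nrm s l'"
  shows "l = l'"
proof (rule ccontr)
  assume "l \<noteq> l'"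
  then have pos: "nrm (l - l') > 0"
    by (simp add: nrm_pos_iff)
  obtain M M' where
    "\<forall>m\<ge>M. nrm (s m - l) < nrm (l - l')" "\<forall>m\<ge>M'. nrm (s m - l') < nrm (l - l')"
    using assms pos unfolding nconv_def by meson
  then have "nrm ((l - s (max M M')) + (s (max M M') - l')) < nrm (l - l')"
    by (metis max.cobounded1 max.cobounded2 nrm_add_less nrm_minus_commute)
  then show False
    by simp
qed

lemma nsuminf_eqI: "nsums nrm f s \<Longrightarrow> nsuminf nrm f = s"
  unfolding nsuminf_def nsums_def by (blast intro: nconv_unique)

lemma nsums_add:
  assumes "nsums nrm f s" "nsums nrm g t"
  shows "nsums nrm (\<lambda>m. f m + g m) (s + t)"
  unfolding nsums_def nconv_def
proof (intro allI impI)
  fix e :: real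
  assume "e > 0"
  then obtain M M' where
    "\<forall>m\<ge>M. nrm ((\<Sum>k<m. f k) - s) < e" "\<forall>m\<ge>M'. nrm ((\<Sum>k<m. g k) - t) < e"
    using assms unfolding nsums_def nconv_def by meson
  then have "nrm (((\<Sum>k<m. f k) - s) + ((\<Sum>k<m. g k) - t)) < e" if "m \<ge> max M M'" for m
    using that by (simp add: nrm_add_less)
  then show "\<exists>M. \<forall>m\<ge>M. nrm ((\<Sum>k<m. f k + g k) - (s + t)) < e"
    by (intro exI[of _ "max M M'"]) (simp add: sum.distrib algebra_simps)
qed

lemma nsums_cmult:
  assumes "nsums nrm f s"
  shows "nsums nrm (\<lambda>m. c * f m) (c * s)"
proof (cases "c = 0")
  case True
  then show ?thesis
    by (simp add: nsums_def nconv_def)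
next
  case False
  show ?thesis
    unfolding nsums_def nconv_def
  proof (intro allI impI)
    fix e :: real
    assume "e > 0"
    with False obtain M where "\<forall>m\<ge>M. nrm ((\<Sum>k<m. f k) - s) < e / nrm c"
      using assms unfolding nsums_def nconv_def by (meson divide_pos_pos nrm_pos_iff)
    then have "nrm (c * ((\<Sum>k<m. f k) - s)) < e" if "m \<ge> M" for m
      using that False by (simp add: nrm_mult nrm_pos_iff pos_less_divide_eq mult.commute)
    then show "\<exists>M. \<forall>m\<ge>M. nrm ((\<Sum>k<m. c * f k) - c * s) < e"
      by (auto simp: sum_distrib_left right_diff_distrib)
  qed
qed

lemma nsums_sum:
  assumes "finite I" "\<And>i. i \<in> I \<Longrightarrow> nsums nrm (f i) (s i)"
  shows "nsums nrm (\<lambda>m. \<Sum>i\<in>I. f i m) (\<Sum>i\<in>I. s i)"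
  using assms
proof (induction I rule: finite_induct)
  case empty
  then show ?case
    by (simp add: nsums_def nconv_def)
next
  case (insert i I)
  then show ?case
    using nsums_add[of "f i" "s i"] by simp
qed

lemma nsums_finite:
  assumes "\<And>k. k > n \<Longrightarrow> f k = 0"
  shows "nsums nrm f (\<Sum>k\<le>n. f k)"
proof -
  have "(\<Sum>k<m. f k) = (\<Sum>k\<le>n. f k)" if "m > n" for m
    using that assms by (intro sum.mono_neutral_right) auto
  then show ?thesis
    unfolding nsums_def nconv_def by (metis Suc_le_lessD diff_self nrm_0)
qed

lemma nsums_exists_of_null:
  assumes "ncomplete nrm" and null: "\<forall>e>0. \<exists>M. \<forall>m\<ge>M. nrm (f m) < e"
  shows "\<exists>s. nsums nrm f s"
proof -
  have "ncauchy nrm (\<lambda>m. \<Sum>k<m. f k)"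
    unfolding ncauchy_def
  proof (intro allI impI)
    fix e :: real
    assume "e > 0"
    then obtain M where M: "\<forall>m\<ge>M. nrm (f m) < e"
      using null by blast
    have tail: "nrm ((\<Sum>k<m. f k) - (\<Sum>k<n. f k)) < e" if "M \<le> n" "n \<le> m" for m n
    proof -
      have "(\<Sum>k<m. f k) - (\<Sum>k<n. f k) = (\<Sum>k\<in>{n..<m}. f k)"
        using that
        by (metis atLeast0LessThan sum.atLeastLessThan_concat zero_le add_diff_cancel_left')
      then show ?thesis
        using \<open>e > 0\<close> M that by (auto intro!: nrm_sum_less)
    qed
    show "\<exists>M. \<forall>m\<ge>M. \<forall>n\<ge>M. nrm ((\<Sum>k<m. f k) - (\<Sum>k<n. f k)) < e"
      using tail nrm_minus_commute by (metis nat_le_linear)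
  qed
  then show ?thesis
    using assms unfolding ncomplete_def nsums_def by blast
qed

lemma nsums_zero_isolate:
  assumes "nsums nrm f 0" and small: "\<And>m. m \<noteq> m\<^sub>0 \<Longrightarrow> nrm (f m) < e"
  shows "nrm (f m\<^sub>0) < e"
proof -
  have "nrm (f (Suc m\<^sub>0)) < e"
    using small by simp
  then have "e > 0"
    using nrm_nonneg le_less_trans by blast
  then obtain K where K: "nrm (\<Sum>k<K. f k) < e" "K > m\<^sub>0"
    using assms(1) unfolding nsums_def nconv_def
    by (metis diff_zero le_eq_less_or_eq less_Suc_eq nat_le_linear)
  have "f m\<^sub>0 = (\<Sum>k<K. f k) + - (\<Sum>k\<in>{..<K} - {m\<^sub>0}. f k)"
    using K(2) by (simp add: sum.remove)
  also have "nrm \<dots> < e"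
    using K(1) \<open>e > 0\<close> small by (intro nrm_add_less) (auto intro!: nrm_sum_less)
  finally show ?thesis .
qed

end

definition annihilates ::
    "('a::field_char_0 \<Rightarrow> real) \<Rightarrow> (nat \<Rightarrow> 'a) \<Rightarrow> (nat \<Rightarrow> 'a) \<Rightarrow> ('a \<Rightarrow> 'a) \<Rightarrow> bool"
  where "annihilates nrm w z g \<longleftrightarrow> nsums nrm (\<lambda>m. w m * g (z m)) 0"

context nonarch_absolute_value
begin

lemma annihilates_add:
  "annihilates nrm w z f \<Longrightarrow> annihilates nrm w z g \<Longrightarrow> annihilates nrm w z (\<lambda>y. f y + g y)"
  unfolding annihilates_def using nsums_add by (fastforce simp: distrib_left)

lemma annihilates_cmult: "annihilates nrm w z f \<Longrightarrow> annihilates nrm w z (\<lambda>y. c * f y)"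
  unfolding annihilates_def using nsums_cmult[of _ 0 c] by (simp add: mult.left_commute)

lemma annihilates_sum:
  "finite I \<Longrightarrow> (\<And>i. i \<in> I \<Longrightarrow> annihilates nrm w z (f i)) \<Longrightarrow>
    annihilates nrm w z (\<lambda>y. \<Sum>i\<in>I. f i y)"
  unfolding annihilates_def using nsums_sum[of I "\<lambda>i m. w m * f i (z m)" "\<lambda>_. 0"]
  by (simp add: sum_distrib_left)

lemma annihilates_triangular:
  fixes c :: "nat \<Rightarrow> nat \<Rightarrow> 'a" and b :: "nat \<Rightarrow> 'a \<Rightarrow> 'a"
  assumes "\<And>i. annihilates nrm w z (\<lambda>y. \<Sum>k\<le>i. c i k * b k y)" and "\<And>i. c i i \<noteq> 0"
  shows "annihilates nrm w z (b j)"
proof (induction j rule: less_induct)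
  case (less j)
  have "annihilates nrm w z (\<lambda>y. \<Sum>k<j. c j k * b k y)"
    using less by (intro annihilates_sum annihilates_cmult) auto
  then have "annihilates nrm w z (\<lambda>y. (\<Sum>k\<le>j. c j k * b k y) + (-1) * (\<Sum>k<j. c j k * b k y))"
    using assms(1) by (intro annihilates_add annihilates_cmult)
  then have "annihilates nrm w z (\<lambda>y. c j j * b j y)"
    by (simp add: lessThan_Suc_atMost[symmetric])
  then have "annihilates nrm w z (\<lambda>y. inverse (c j j) * (c j j * b j y))"
    by (rule annihilates_cmult)
  moreover have "inverse (c j j) * (c j j * x) = x" for x
    using assms(2) by (simp add: mult.assoc[symmetric])
  ultimately show ?case
    by simp
qed

lemma annihilates_gchoose_mult_affine:
  assumes "\<forall>j. annihilates nrm w z (\<lambda>y. (y gchoose j) * g y)"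
  shows "annihilates nrm w z (\<lambda>y. (y gchoose j) * ((s * y + t) * g y))"
proof -
  have "annihilates nrm w z (\<lambda>y. (s * of_nat j + t) * ((y gchoose j) * g y)
      + s * of_nat (Suc j) * ((y gchoose Suc j) * g y))"
    using assms by (intro annihilates_add annihilates_cmult) auto
  moreover have "(y gchoose j) * ((s * y + t) * g y) = (s * of_nat j + t) * ((y gchoose j) * g y)
      + s * of_nat (Suc j) * ((y gchoose Suc j) * g y)" for y
  proof -
    have "(y gchoose j) * ((s * y + t) * g y) =
        s * g y * (y * (y gchoose j)) + t * ((y gchoose j) * g y)"
      by (simp add: algebra_simps)
    then show ?thesis
      unfolding gbinomial_mult_1 by (simp add: algebra_simps del: of_nat_Suc)
  qed
  ultimately show ?thesis
    by simp
qed

lemma annihilates_gchoose_mult_gchoose_affine: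
  assumes "\<forall>j. annihilates nrm w z (\<lambda>y. (y gchoose j) * g y)"
  shows "\<forall>j. annihilates nrm w z (\<lambda>y. (y gchoose j) * (((s * y + t) gchoose k) * g y))"
proof (induction k)
  case 0
  then show ?case
    using assms by simp
next
  case (Suc k)
  let ?s = "s / of_nat (Suc k)" and ?t = "(t - of_nat k) / of_nat (Suc k)"
  have "(s * y + t) gchoose Suc k = (?s * y + ?t) * ((s * y + t) gchoose k)" for y
    by (simp add: gbinomial_Suc_eq add_divide_distrib diff_divide_distrib del: of_nat_Suc)
  then show ?case
    using annihilates_gchoose_mult_affine[OF Suc.IH, of _ ?s ?t] by (simp add: mult.assoc)
qed

lemma annihilates_binomial_bump:
  assumes "\<And>j. annihilates nrm w z (\<lambda>y. y gchoose j)"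
  shows "annihilates nrm w z (binomial_bump M n\<^sub>0 N)"
proof -
  have "\<forall>j. annihilates nrm w z (\<lambda>y. (y gchoose j) * 1)"
    using assms by simp
  then have "\<forall>j. annihilates nrm w z (\<lambda>y. (y gchoose j) *
      (((1 * y + - of_int M) gchoose nat (n\<^sub>0 - M)) *
       ((((-1) * y + of_int N) gchoose nat (N - n\<^sub>0)) * 1)))"
    by (intro annihilates_gchoose_mult_gchoose_affine)
  then have "annihilates nrm w z (\<lambda>y. (y gchoose 0) *
      (((1 * y + - of_int M) gchoose nat (n\<^sub>0 - M)) *
       ((((-1) * y + of_int N) gchoose nat (N - n\<^sub>0)) * 1)))"
    by blast
  then show ?thesis
    unfolding binomial_bump_def[abs_def] by simp
qed

lemma vanishes_if_annihilates_binomials: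
  fixes h :: "int \<Rightarrow> 'a" and N n\<^sub>0 :: int
  assumes annih:
      "\<And>j. annihilates nrm (\<lambda>m. h (N - int m)) (\<lambda>m. of_int (N - int m)) (\<lambda>y. y gchoose j)"
    and null: "\<forall>e>0. \<exists>M. \<forall>n\<le>M. nrm (h n) < e"
    and "n\<^sub>0 \<le> N"
  shows "h n\<^sub>0 = 0"
proof (rule eq_0_if_nrm_less)
  fix e :: real
  assume "e > 0"
  then obtain M where M: "\<And>n. n \<le> M \<Longrightarrow> nrm (h n) < e"
    using null by blast
  show "nrm (h n\<^sub>0) < e"
  proof (cases "n\<^sub>0 \<le> M")
    case True
    then show ?thesis
      using M by blast
  next
    case False
    define Q :: "'a \<Rightarrow> 'a" where "Q = binomial_bump M n\<^sub>0 N"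
    have sums: "nsums nrm (\<lambda>m. h (N - int m) * Q (of_int (N - int m))) 0"
      using annihilates_binomial_bump[OF annih] by (simp add: annihilates_def Q_def)
    have others_small: "nrm (h (N - int m) * Q (of_int (N - int m))) < e"
      if "m \<noteq> nat (N - n\<^sub>0)" for m
    proof (cases "M \<le> N - int m")
      case True
      moreover have "N - int m \<noteq> n\<^sub>0"
        using that \<open>n\<^sub>0 \<le> N\<close> by auto
      ultimately have "Q (of_int (N - int m)) = 0"
        unfolding Q_def by (intro binomial_bump_vanishes) simp_all
      then show ?thesis
        using \<open>e > 0\<close> by simp
    next
      case False
      have "nrm (h (N - int m) * Q (of_int (N - int m))) \<le> nrm (h (N - int m)) * 1"
        unfolding nrm_mult Q_def
        by (intro mult_left_mono nrm_Ints_le_1 binomial_bump_Ints nrm_nonneg)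
      also have "\<dots> < e"
        using False M by simp
      finally show ?thesis .
    qed
    have "nrm (h (N - int (nat (N - n\<^sub>0))) * Q (of_int (N - int (nat (N - n\<^sub>0))))) < e"
      using sums others_small by (rule nsums_zero_isolate)
    moreover have "Q (of_int n\<^sub>0) = 1"
      unfolding Q_def using False \<open>n\<^sub>0 \<le> N\<close> by (intro binomial_bump_center) simp_all
    ultimately show ?thesis
      using \<open>n\<^sub>0 \<le> N\<close> by simp
  qed
qed

lemma Sop_of_nat:
  "Sop nrm y \<phi> (of_nat i) =
     (\<Sum>k\<le>i. (-1) ^ k * of_nat (fact k) * (y gchoose k) * (of_nat i gchoose k) *
        \<phi> (of_nat i - of_nat k))"
  unfolding Sop_def binom_eq_gbinomial
  by (intro nsuminf_eqI nsums_finite) (simp add: gbinomial_of_nat_eq_0)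

lemma xm1_star_of_nat:
  "xm1_star nrm n (of_nat i) =
     (-1) ^ nat \<bar>n\<bar> *
       (\<Sum>k\<le>i. (-1) ^ k * of_nat (fact k) * (of_nat i gchoose k) * (of_int n gchoose k))"
  unfolding xm1_star_def Sop_of_nat by (simp add: mult_ac)

lemma annihilates_xm1_star_expansion:
  fixes a :: "int \<Rightarrow> 'a" and N :: int
  assumes "ncomplete nrm" and null: "\<forall>e>0. \<exists>M. \<forall>n\<le>M. nrm (a n) < e"
    and vanish: "nsuminf nrm (\<lambda>m. a (N - int m) * xm1_star nrm (N - int m) (of_nat i)) = 0"
  shows "annihilates nrm (\<lambda>m. a (N - int m) * (-1) ^ nat \<bar>N - int m\<bar>)
           (\<lambda>m. of_int (N - int m))
           (\<lambda>y. \<Sum>k\<le>i. ((-1) ^ k * of_nat (fact k) * (of_nat i gchoose k)) * (y gchoose k))"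
    (is "annihilates nrm ?w ?z ?P")
proof -
  have terms: "a (N - int m) * xm1_star nrm (N - int m) (of_nat i) = ?w m * ?P (?z m)" for m
    unfolding xm1_star_of_nat by (simp add: mult_ac)
  have P_Ints: "?P (of_int n) \<in> \<int>" for n
    by (intro Ints_sum Ints_mult Ints_power Ints_minus Ints_1 Ints_of_nat gbinomial_of_int_Ints)
      (simp flip: binomial_gbinomial)
  have "\<exists>s. nsums nrm (\<lambda>m. ?w m * ?P (?z m)) s"
  proof (rule nsums_exists_of_null[OF \<open>ncomplete nrm\<close>], intro allI impI)
    fix e :: real
    assume "e > 0"
    then obtain M where M: "\<forall>n\<le>M. nrm (a n) < e"
      using null by blast
    have "nrm (?w m * ?P (?z m)) < e" if "m \<ge> nat (N - M)" for m
    proof -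
      have "nrm (?w m * ?P (?z m)) = nrm (a (N - int m)) * nrm (?P (?z m))"
        by (simp add: nrm_mult nrm_power)
      also have "\<dots> \<le> nrm (a (N - int m)) * 1"
        by (intro mult_left_mono nrm_Ints_le_1 P_Ints nrm_nonneg)
      also have "\<dots> < e"
        using M that by simp
      finally show ?thesis .
    qed
    then show "\<exists>M. \<forall>m\<ge>M. nrm (?w m * ?P (?z m)) < e"
      by blast
  qed
  then obtain s where "nsums nrm (\<lambda>m. ?w m * ?P (?z m)) s"
    by blast
  moreover have "s = 0"
    using vanish nsuminf_eqI[OF calculation] by (simp add: terms)
  ultimately show ?thesis
    unfolding annihilates_def by simp
qed

end

theorem proposition6p9:
  fixes p :: nat and nrm :: "'a::field_char_0 \<Rightarrow> real"
    and N :: int and a :: "int \<Rightarrow> 'a"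
  assumes amb: "padic_ambient p nrm"
    and coeffs: "\<forall>n\<le>N. a n \<in> Cp nrm"
    and null: "\<forall>e>0. \<exists>M. \<forall>n\<le>M. nrm (a n) < e"
    and zero: "\<forall>x\<in>Zp nrm.
                 nsuminf nrm (\<lambda>m. a (N - int m) * xm1_star nrm (N - int m) x) = 0"
  shows "\<forall>n\<le>N. a n = 0"
proof -
  have nonarch: "nonarch_abs nrm" and complete: "ncomplete nrm"
    using amb by (simp_all add: padic_ambient_def)
  interpret nonarch_absolute_value nrm
    using nonarch by unfold_locales
  define h where "h n = a n * (-1) ^ nat \<bar>n\<bar>" for n
  have "annihilates nrm (\<lambda>m. h (N - int m)) (\<lambda>m. of_int (N - int m))
          (\<lambda>y. \<Sum>k\<le>i. ((-1) ^ k * of_nat (fact k) * (of_nat i gchoose k)) * (y gchoose k))" for i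
    using annihilates_xm1_star_expansion[OF complete null] zero of_nat_in_Zp
    unfolding h_def by blast
  then have
    "annihilates nrm (\<lambda>m. h (N - int m)) (\<lambda>m. of_int (N - int m)) (\<lambda>y. y gchoose j)" for j
    by (rule annihilates_triangular) (simp add: gbinomial_of_nat_self)
  moreover have "\<forall>e>0. \<exists>M. \<forall>n\<le>M. nrm (h n) < e"
    using null by (simp add: h_def nrm_mult nrm_power)
  ultimately have "h n = 0" if "n \<le> N" for n
    using vanishes_if_annihilates_binomials that by blast
  then show ?thesis
    by (simp add: h_def)
qed


end
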